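(* For $k\in\mathbb{N}$ and $s\in\mathbb{N}_0$ let \[ C_{s,k}:=\sum_{m=0}^{2s}(-1)^m\binom{2k+2s}{m}S(2k+2s-m,2k)\,k^m, \] where $S(n,m)$ denote the Stirling numbers of the second kind. Then for every $k\in\mathbb{N}$ and every $t$ with $|t|<1/k$, \[ \sum_{s=0}^{\infty}C_{s,k}\,t^{2s+2k}=\prod_{j=1}^{k}\frac{t^2}{1-j^2t^2}. \]
   Context: $S(n,m)$ is the Stirling number of the second kind (number of partitions of an $n$-element set into $m$ nonempty blocks), with $S(n,m)=0$ if $n<m$. *)

theory Defs
  imports "HOL-Analysis.Analysis" "HOL-Combinatorics.Stirling"
begin

definition C_coeff :: "nat \<Rightarrow> nat \<Rightarrow> int" where
  "C_coeff s k = (\<Sum>m\<in>{0..2 * s}. (-1) ^ m * int ((2 * k + 2 * s) choose m)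
                    * int (Stirling (2 * k + 2 * s - m) (2 * k)) * int k ^ m)"

end

(*
  Let D^r f = sum_{i=0..r} (-1)^(r-i) (r choose i) f(i) be the r-th forward difference at 0.
  Since r! S(n,r) = D^r x^n, the binomial theorem gives (2k)! C_{s,k} = D^{2k} (x-k)^{2k+2s}.
  The differences D^{2k} (x-k)^n vanish for n < 2k (degree) and for odd n (reflection
  x -> 2k - x), so (2k)! times the series is the whole generating function
  sum_n D^{2k} (x-k)^n t^n = D^{2k} 1/(1 - (x-k) t).  As 1 - (x-k) t = -t (x - k - 1/t), the
  partial fraction identity D^r 1/(x+a) = (-1)^r r! / (a (a+1) ... (a+r)) evaluates it, and
  pairing the factors at k - j and k + j of that product gives (2k)! prod_{j=1..k} t^2/(1 - j^2 t^2).
*)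
theory Submission
  imports Defs
begin

text \<open>The sign \<open>(-1) ^ (r + i)\<close> stands for \<open>(-1) ^ (r - i)\<close>, avoiding truncated subtraction.\<close>

definition forward_diff :: "nat \<Rightarrow> (nat \<Rightarrow> 'a::comm_ring_1) \<Rightarrow> 'a" where
  "forward_diff r f = (\<Sum>i\<le>r. (-1) ^ (r + i) * of_nat (r choose i) * f i)"

lemma forward_diff_0 [simp]: "forward_diff 0 f = f 0"
  by (simp add: forward_diff_def)

lemma forward_diff_cong:
  "(\<And>i. i \<le> r \<Longrightarrow> f i = g i) \<Longrightarrow> forward_diff r f = forward_diff r g"
  unfolding forward_diff_def by (intro sum.cong) auto

lemma forward_diff_mult_left: "forward_diff r (\<lambda>i. c * f i) = c * forward_diff r f"
  unfolding forward_diff_def sum_distrib_left by (simp only: mult_ac)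

lemma forward_diff_mult_right: "forward_diff r (\<lambda>i. f i * c) = forward_diff r f * c"
  unfolding forward_diff_def sum_distrib_right by (simp only: mult_ac)

lemma forward_diff_neg: "forward_diff r (\<lambda>i. - f i) = - forward_diff r f"
  using forward_diff_mult_left[of r "-1" f] by simp

lemma forward_diff_sum:
  "forward_diff r (\<lambda>i. \<Sum>m\<in>A. f m i) = (\<Sum>m\<in>A. forward_diff r (f m))"
  unfolding forward_diff_def by (simp add: sum_distrib_left sum.swap[of _ A])

lemma forward_diff_Suc:
  "forward_diff (Suc r) f = forward_diff r (\<lambda>i. f (Suc i)) - forward_diff r f"
proof -
  define a where "a i = (-1) ^ (r + i) * f (Suc i)" for i
  have shift: "forward_diff (Suc r) f = (-1) ^ Suc r * f 0
      + (\<Sum>i\<le>r. a i * of_nat (r choose i)) + (\<Sum>i\<le>r. a i * of_nat (r choose Suc i))"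
    unfolding forward_diff_def a_def
    by (subst sum.atMost_Suc_shift) (simp add: sum.distrib algebra_simps)
  have "forward_diff r f = (\<Sum>i\<le>Suc r. (-1) ^ (r + i) * of_nat (r choose i) * f i)"
    by (simp add: forward_diff_def binomial_eq_0)
  also have "\<dots> = (-1) ^ r * f 0 - (\<Sum>i\<le>r. a i * of_nat (r choose Suc i))"
    unfolding a_def by (subst sum.atMost_Suc_shift) (simp add: sum_negf[symmetric] mult_ac)
  finally show ?thesis
    using shift unfolding forward_diff_def a_def by (simp add: mult_ac)
qed

lemma forward_diff_const: "forward_diff (Suc r) (\<lambda>_. c) = 0"
  by (simp add: forward_diff_Suc)

lemma forward_diff_of_nat_mult:
  "forward_diff (Suc r) (\<lambda>i. of_nat i * g i) = of_nat (Suc r) * forward_diff r (\<lambda>i. g (Suc i))"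
proof -
  have absorb: "of_nat (Suc i) * of_nat (Suc r choose Suc i) = (of_nat (Suc r) * of_nat (r choose i) :: 'a)"
    for i by (metis Suc_times_binomial of_nat_mult)
  have "forward_diff (Suc r) (\<lambda>i. of_nat i * g i)
      = (\<Sum>i\<le>r. (-1) ^ (r + i) * (of_nat (Suc i) * of_nat (Suc r choose Suc i)) * g (Suc i))"
    unfolding forward_diff_def
    by (subst sum.atMost_Suc_shift) (simp del: of_nat_Suc binomial_Suc_Suc add: mult_ac)
  then show ?thesis
    unfolding absorb forward_diff_def by (simp add: sum_distrib_left mult_ac)
qed

lemma forward_diff_power_Stirling:
  "forward_diff r (\<lambda>i. of_nat i ^ n) = of_nat (fact r * Stirling n r)"
proof (induction n arbitrary: r)
  case 0
  then show ?case by (cases r) (simp_all add: forward_diff_const)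
next
  case (Suc n)
  show ?case
  proof (cases r)
    case 0
    then show ?thesis by simp
  next
    case (Suc r')
    have "forward_diff (Suc r') (\<lambda>i. of_nat i ^ Suc n :: 'a)
        = of_nat (Suc r') * forward_diff r' (\<lambda>i. of_nat (Suc i) ^ n)"
      using forward_diff_of_nat_mult[of r' "\<lambda>i. of_nat i ^ n"] by simp
    also have "\<dots> = of_nat (Suc r') * (forward_diff (Suc r') (\<lambda>i. of_nat i ^ n)
                                       + forward_diff r' (\<lambda>i. of_nat i ^ n))"
      by (simp add: forward_diff_Suc)
    also have "\<dots> = of_nat (fact (Suc r') * Stirling (Suc n) (Suc r'))"
      by (simp add: Suc.IH algebra_simps)
    finally show ?thesis using Suc by simp
  qed
qed

lemma forward_diff_shifted_power:
  "forward_diff r (\<lambda>i. (of_nat i - c) ^ n) =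
     of_nat (fact r) * (\<Sum>m\<le>n. (-1) ^ m * of_nat (n choose m) * of_nat (Stirling (n - m) r) * c ^ m)"
proof -
  have "(of_nat i - c) ^ n = (\<Sum>m\<le>n. (-1) ^ m * of_nat (n choose m) * c ^ m * of_nat i ^ (n - m))" for i
  proof -
    have "(of_nat i - c) ^ n = (- c + of_nat i) ^ n"
      by simp
    also have "\<dots> = (\<Sum>m\<le>n. of_nat (n choose m) * (- c) ^ m * of_nat i ^ (n - m))"
      by (rule binomial_ring)
    finally show ?thesis
      unfolding power_minus[of c] by (simp only: mult_ac)
  qed
  then have "forward_diff r (\<lambda>i. (of_nat i - c) ^ n)
      = (\<Sum>m\<le>n. (-1) ^ m * of_nat (n choose m) * c ^ m * forward_diff r (\<lambda>i. of_nat i ^ (n - m)))"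
    by (simp only: forward_diff_sum forward_diff_mult_left)
  also have "\<dots> = (\<Sum>m\<le>n. (-1) ^ m * of_nat (n choose m) * c ^ m * of_nat (fact r * Stirling (n - m) r))"
    by (simp only: forward_diff_power_Stirling)
  finally show ?thesis
    by (simp add: sum_distrib_left mult_ac)
qed

lemma forward_diff_shifted_power_eq_0:
  assumes "n < r"
  shows "forward_diff r (\<lambda>i. (of_nat i - c) ^ n) = 0"
proof -
  have "Stirling (n - m) r = 0" for m
    using assms by simp
  then show ?thesis
    unfolding forward_diff_shifted_power by simp
qed

lemma forward_diff_reflect: "forward_diff r (\<lambda>i. f (r - i)) = (-1) ^ r * forward_diff r f"
proof -
  have "(\<Sum>i=0..r. (-1) ^ (r + i) * of_nat (r choose i) * f (r - i))
      = (\<Sum>i=0..r. (-1) ^ (r + (r - i)) * of_nat (r choose (r - i)) * f i)"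
    by (subst sum.atLeastAtMost_rev) (auto intro!: sum.cong)
  also have "\<dots> = (\<Sum>i=0..r. (-1) ^ r * ((-1) ^ (r + i) * of_nat (r choose i) * f i))"
  proof (intro sum.cong refl)
    fix i assume "i \<in> {0..r}"
    then have "i \<le> r" by simp
    have "(-1) ^ (r + (r - i)) = ((-1) ^ r * (-1) ^ (r - i) :: 'a)"
      by (rule power_add)
    also have "(-1) ^ (r - i) = ((-1) ^ (r + i) :: 'a)"
      by (rule neg_one_power_add_eq_neg_one_power_diff[OF \<open>i \<le> r\<close>, symmetric])
    finally have "(-1) ^ (r + (r - i)) = ((-1) ^ r * (-1) ^ (r + i) :: 'a)" .
    with \<open>i \<le> r\<close> show "(-1) ^ (r + (r - i)) * of_nat (r choose (r - i)) * f i
        = (-1) ^ r * ((-1) ^ (r + i) * of_nat (r choose i) * f i)"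
      by (simp add: binomial_symmetric[symmetric])
  qed
  finally show ?thesis
    by (simp add: forward_diff_def atLeast0AtMost sum_distrib_left)
qed

lemma forward_diff_centered_odd_power:
  assumes "odd n"
  shows "forward_diff (2 * k) (\<lambda>i. (of_nat i - of_nat k :: 'a::linordered_idom) ^ n) = 0"
proof -
  let ?f = "\<lambda>i. (of_nat i - of_nat k :: 'a) ^ n"
  have "forward_diff (2 * k) ?f = forward_diff (2 * k) (\<lambda>i. ?f (2 * k - i))"
    using forward_diff_reflect[of "2 * k" ?f] by simp
  also have "\<dots> = forward_diff (2 * k) (\<lambda>i. - ?f i)"
    by (intro forward_diff_cong) (simp add: of_nat_diff power_minus_odd[OF assms, symmetric])
  finally show ?thesis by (simp add: forward_diff_neg)
qed

lemma forward_diff_reciprocal: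
  fixes x :: "'a::field"
  assumes "\<And>i. i \<le> r \<Longrightarrow> of_nat i + x \<noteq> 0"
  shows "forward_diff r (\<lambda>i. 1 / (of_nat i + x)) = (-1) ^ r * of_nat (fact r) / (\<Prod>i\<le>r. of_nat i + x)"
  using assms
proof (induction r arbitrary: x)
  case 0
  then show ?case by simp
next
  case (Suc r)
  define P where "P = (\<Prod>i\<le>Suc r. of_nat i + x)"
  define A where "A = (\<Prod>i\<le>r. of_nat i + (x + 1))"
  define B where "B = (\<Prod>i\<le>r. of_nat i + x)"
  have P_A: "P = x * A"
    unfolding P_def A_def by (simp add: prod.atMost_Suc_shift ac_simps del: prod.atMost_Suc)
  have P_B: "P = B * (of_nat (Suc r) + x)"
    unfolding P_def B_def by simp
  have "P \<noteq> 0"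
    unfolding P_def using Suc.prems by (simp del: prod.atMost_Suc)
  then have "x \<noteq> 0" "of_nat (Suc r) + x \<noteq> 0"
    using P_A P_B by auto
  have "of_nat i + (x + 1) \<noteq> 0" if "i \<le> r" for i
    using Suc.prems[of "Suc i"] that by (simp add: add_ac)
  then have "forward_diff r (\<lambda>i. 1 / (of_nat (Suc i) + x)) = (-1) ^ r * of_nat (fact r) / A"
    using Suc.IH[of "x + 1"] unfolding A_def by (simp add: add_ac)
  moreover have "forward_diff r (\<lambda>i. 1 / (of_nat i + x)) = (-1) ^ r * of_nat (fact r) / B"
    using Suc.IH[of x] Suc.prems unfolding B_def by simp
  ultimately have "forward_diff (Suc r) (\<lambda>i. 1 / (of_nat i + x)) = (-1) ^ r * of_nat (fact r) * (1 / A - 1 / B)"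
    unfolding forward_diff_Suc by (simp add: algebra_simps)
  also have "1 / A - 1 / B = - of_nat (Suc r) / P"
  proof -
    have "1 / A = x / P"
      using \<open>x \<noteq> 0\<close> P_A by simp
    moreover have "1 / B = (of_nat (Suc r) + x) / P"
      using \<open>of_nat (Suc r) + x \<noteq> 0\<close> P_B by simp
    ultimately show ?thesis
      by (simp add: diff_divide_distrib[symmetric])
  qed
  also have "(-1) ^ r * of_nat (fact r) * (- of_nat (Suc r) / P) = (-1) ^ Suc r * of_nat (fact (Suc r)) / P"
    by (simp add: algebra_simps)
  finally show ?case
    unfolding P_def .
qed

lemma prod_centered_factors:
  fixes u :: "'a::comm_ring_1"
  shows "(\<Prod>i\<le>2 * k. of_nat i - of_nat k - u) = - u * (\<Prod>j=1..k. u\<^sup>2 - of_nat j ^ 2)"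
proof (induction k)
  case 0
  then show ?case by simp
next
  case (Suc k)
  define f where "f i = of_nat i - of_nat (Suc k) - u" for i
  have two_Suc: "2 * Suc k = Suc (Suc (2 * k))"
    by simp
  have "(\<Prod>i\<le>2 * Suc k. f i) = (\<Prod>i\<le>Suc (2 * k). f i) * f (2 * Suc k)"
    unfolding two_Suc by (rule prod.atMost_Suc)
  also have "(\<Prod>i\<le>Suc (2 * k). f i) = f 0 * (\<Prod>i\<le>2 * k. f (Suc i))"
    by (rule prod.atMost_Suc_shift)
  also have "(\<Prod>i\<le>2 * k. f (Suc i)) = (\<Prod>i\<le>2 * k. of_nat i - of_nat k - u)"
    unfolding f_def by simp
  also have "\<dots> = - u * (\<Prod>j=1..k. u\<^sup>2 - of_nat j ^ 2)"
    by (rule Suc.IH)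
  also have "f 0 * (- u * (\<Prod>j=1..k. u\<^sup>2 - of_nat j ^ 2)) * f (2 * Suc k)
      = - u * (\<Prod>j=1..Suc k. u\<^sup>2 - of_nat j ^ 2)"
    unfolding f_def by (simp add: prod.nat_ivl_Suc' algebra_simps power2_eq_square)
  finally show ?case
    unfolding f_def .
qed

lemma forward_diff_geometric_sums:
  fixes g :: "nat \<Rightarrow> 'a::real_normed_field"
  assumes "\<And>i. i \<le> r \<Longrightarrow> norm (g i) < 1"
  shows "(\<lambda>n. forward_diff r (\<lambda>i. g i ^ n)) sums forward_diff r (\<lambda>i. 1 / (1 - g i))"
  unfolding forward_diff_def by (intro sums_sum sums_mult geometric_sums) (simp add: assms)

lemma abs_centered_mult_less:
  fixes t :: real
  assumes "i \<le> 2 * k" and "real k * \<bar>t\<bar> < 1"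
  shows "\<bar>(real i - real k) * t\<bar> < 1"
proof -
  have "\<bar>real i - real k\<bar> \<le> real k"
    using assms(1) by auto
  then have "\<bar>(real i - real k) * t\<bar> \<le> real k * \<bar>t\<bar>"
    by (simp add: abs_mult mult_right_mono)
  with assms(2) show ?thesis by linarith
qed

lemma forward_diff_centered_geometric:
  fixes t :: real
  assumes "real k * \<bar>t\<bar> < 1"
  shows "forward_diff (2 * k) (\<lambda>i. 1 / (1 - (real i - real k) * t))
           = fact (2 * k) * (\<Prod>j=1..k. t\<^sup>2 / (1 - (real j)\<^sup>2 * t\<^sup>2))"
proof (cases "t = 0")
  case True
  then show ?thesis by (cases k) (simp_all add: forward_diff_const)
next
  case False
  define u where "u = 1 / t"
  have reciprocal_eq: "1 / (1 - (real i - real k) * t) = - u * (1 / (real i + (- real k - u)))" for i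
  proof -
    have "1 - (real i - real k) * t = - t * (real i + (- real k - u))"
      using False unfolding u_def by (simp add: algebra_simps)
    then show ?thesis
      unfolding u_def by simp
  qed
  have "forward_diff (2 * k) (\<lambda>i. 1 / (1 - (real i - real k) * t))
      = - u * forward_diff (2 * k) (\<lambda>i. 1 / (real i + (- real k - u)))"
    unfolding reciprocal_eq by (rule forward_diff_mult_left)
  also have "\<dots> = - u * (fact (2 * k) / (\<Prod>i\<le>2 * k. real i - real k - u))"
  proof -
    have "real i + (- real k - u) \<noteq> 0" if "i \<le> 2 * k" for i
      using abs_centered_mult_less[OF that assms] False unfolding u_def by (auto simp: field_simps)
    from forward_diff_reciprocal[of "2 * k", OF this] show ?thesis
      by (simp add: algebra_simps)
  qed
  also have "\<dots> = fact (2 * k) / (\<Prod>j=1..k. u\<^sup>2 - (real j)\<^sup>2)"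
    using False unfolding prod_centered_factors u_def by simp
  also have "\<dots> = fact (2 * k) * (\<Prod>j=1..k. t\<^sup>2 / (1 - (real j)\<^sup>2 * t\<^sup>2))"
    using False unfolding u_def by (simp add: prod_dividef field_simps)
  finally show ?thesis .
qed

lemma forward_diff_centered_power_sums:
  fixes t :: real
  assumes "real k * \<bar>t\<bar> < 1"
  shows "(\<lambda>n. forward_diff (2 * k) (\<lambda>i. (real i - real k) ^ n) * t ^ n)
           sums (fact (2 * k) * (\<Prod>j=1..k. t\<^sup>2 / (1 - (real j)\<^sup>2 * t\<^sup>2)))"
proof -
  have "(\<lambda>n. forward_diff (2 * k) (\<lambda>i. ((real i - real k) * t) ^ n))
          sums forward_diff (2 * k) (\<lambda>i. 1 / (1 - (real i - real k) * t))"
    by (rule forward_diff_geometric_sums) (simp add: abs_centered_mult_less assms)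
  then show ?thesis
    by (simp add: power_mult_distrib forward_diff_mult_right forward_diff_centered_geometric assms)
qed

lemma C_coeff_eq_forward_diff:
  "real_of_int (C_coeff s k) * fact (2 * k) = forward_diff (2 * k) (\<lambda>i. (real i - real k) ^ (2 * k + 2 * s))"
proof -
  let ?n = "2 * k + 2 * s"
  have "(\<Sum>m\<le>?n. (-1) ^ m * real (?n choose m) * real (Stirling (?n - m) (2 * k)) * real k ^ m)
      = (\<Sum>m\<le>2 * s. (-1) ^ m * real (?n choose m) * real (Stirling (?n - m) (2 * k)) * real k ^ m)"
  proof (rule sum.mono_neutral_right)
    show "\<forall>m\<in>{..?n} - {..2 * s}.
        (-1) ^ m * real (?n choose m) * real (Stirling (?n - m) (2 * k)) * real k ^ m = 0"
    proof
      fix m assume "m \<in> {..?n} - {..2 * s}"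
      then have "?n - m < 2 * k" by auto
      then show "(-1) ^ m * real (?n choose m) * real (Stirling (?n - m) (2 * k)) * real k ^ m = 0"
        by simp
    qed
  qed auto
  then show ?thesis
    by (simp add: C_coeff_def forward_diff_shifted_power atLeast0AtMost mult_ac)
qed

lemma sums_even_from:
  assumes "f sums S" and "\<And>n. n < 2 * k \<or> odd n \<Longrightarrow> f n = 0"
  shows "(\<lambda>s. f (2 * s + 2 * k)) sums S"
proof -
  have "strict_mono (\<lambda>s. 2 * s + 2 * k :: nat)"
    by (rule strict_monoI) simp
  moreover have "f n = 0" if "n \<notin> range (\<lambda>s. 2 * s + 2 * k)" for n
  proof (rule assms(2), rule ccontr)
    assume "\<not> (n < 2 * k \<or> odd n)"
    then have "n = 2 * ((n - 2 * k) div 2) + 2 * k" by auto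
    with that show False by blast
  qed
  ultimately show ?thesis
    using sums_mono_reindex assms(1) by blast
qed

theorem mainTheorem5:
  fixes k :: nat and t :: real
  assumes "k \<ge> 1" and "\<bar>t\<bar> < 1 / real k"
  shows "(\<lambda>n. real_of_int (C_coeff n k) * t ^ (2 * n + 2 * k)) sums
           (\<Prod>j=1..k. t^2 / (1 - (real j)^2 * t^2))"
proof -
  have kt: "real k * \<bar>t\<bar> < 1"
    using assms by (simp add: field_simps)
  define a where "a n = forward_diff (2 * k) (\<lambda>i. (real i - real k) ^ n) * t ^ n / fact (2 * k)" for n
  have "a sums (\<Prod>j=1..k. t^2 / (1 - (real j)^2 * t^2))"
    using sums_divide[OF forward_diff_centered_power_sums[OF kt], of "fact (2 * k)"] unfolding a_def by simp
  moreover have "a n = 0" if "n < 2 * k \<or> odd n" for n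
    using that unfolding a_def
    by (elim disjE) (simp_all add: forward_diff_shifted_power_eq_0 forward_diff_centered_odd_power)
  ultimately have "(\<lambda>s. a (2 * s + 2 * k)) sums (\<Prod>j=1..k. t^2 / (1 - (real j)^2 * t^2))"
    by (rule sums_even_from)
  moreover have "a (2 * s + 2 * k) = real_of_int (C_coeff s k) * t ^ (2 * s + 2 * k)" for s
    using C_coeff_eq_forward_diff[of s k, symmetric] unfolding a_def by (simp add: add.commute)
  ultimately show ?thesis by simp
qed

end
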